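(* Let $\mathcal{L}$ be a subspace lattice on a Banach space $X$ over $\mathbb{K}\in\{\mathbb{R},\mathbb{C}\}$ and let $\delta:\mathrm{alg}\mathcal{L}\to\mathrm{alg}\mathcal{L}$ be a weak $(m,n,l)$-Jordan centralizer. Suppose $E,L\in\mathcal{J}(\mathcal{L})$ satisfy $E_-\not\supseteq L$, and let $x\in E$ and $f\in L_-^{\perp}$. Then $x\otimes f\in\mathrm{alg}\mathcal{L}$ and $\big(\delta(x\otimes f)-\lambda(x\otimes f)\big)X\subseteq\mathbb{K}x$, where $\lambda(A):=\frac{1}{m+n+2l}(\lambda_{A+I}-\lambda_A)I$.
   Context: Fixed integers $m,n,l\ge 0$ satisfy $m+l\ge1$ and $n+l\ge1$. A linear map $\delta$ from a unital algebra $\mathcal{A}$ (identity $I$) into itself is a weak $(m,n,l)$-Jordan centralizer if for every $A\in\mathcal{A}$ there is $\lambda_A\in\mathbb{K}$ with $(m+n+l)\delta(A^2)=m\delta(A)A+nA\delta(A)+lA\delta(I)A+\lambda_A I$. A subspace lattice $\mathcal{L}$ on $X$ is a collection of closed subspaces containing $(0)$ and $X$ and closed under arbitrary intersections and closed linear spans; $\mathrm{alg}\mathcal{L}$ is the algebra of bounded operators leaving every member of $\mathcal{L}$ invariant. For $E\in\mathcal{L}$, $E_-=\vee\{F\in\mathcal{L}:F\not\supseteq E\}$; $\mathcal{J}(\mathcal{L})=\{K\in\mathcal{L}:K\ne(0),\ K_-\ne X\}$. For $L\subseteq X$, $L^\perp=\{f\in X^*: f|_L=0\}$. $x\otimes f$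 is the operator $y\mapsto f(y)x$. *)

theory Defs
  imports "HOL-Analysis.Analysis"
begin

text \<open>A Banach space over a scalar field 'k (later restricted to R or C): the carrier type
  'a is a real Banach space (norm, addition, completeness) and sc is a scalar
  multiplication by 'k extending the real one, with homogeneous norm.\<close>
definition scalar_structure :: "('k::real_normed_field \<Rightarrow> 'a::banach \<Rightarrow> 'a) \<Rightarrow> bool" where
  "scalar_structure sc \<longleftrightarrow>
     (\<forall>a x y. sc a (x + y) = sc a x + sc a y) \<and>
     (\<forall>a b x. sc (a + b) x = sc a x + sc b x) \<and>
     (\<forall>a b x. sc a (sc b x) = sc (a * b) x) \<and>
     (\<forall>x. sc 1 x = x) \<and>
     (\<forall>r x. sc (of_real r) x = scaleR r x) \<and>
     (\<forall>a x. norm (sc a x) = norm a * norm x)"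

definition real_or_complex :: "'k::real_normed_field itself \<Rightarrow> bool" where
  "real_or_complex _ \<longleftrightarrow>
     (\<exists>\<phi>::'k \<Rightarrow> complex. inj \<phi> \<and>
        (\<forall>a b. \<phi> (a + b) = \<phi> a + \<phi> b \<and> \<phi> (a * b) = \<phi> a * \<phi> b) \<and>
        (\<forall>r. \<phi> (of_real r) = complex_of_real r) \<and>
        (\<forall>a. norm (\<phi> a) = norm a) \<and>
        (range \<phi> = range complex_of_real \<or> range \<phi> = UNIV))"

definition bounded_op :: "('k::real_normed_field \<Rightarrow> 'a::banach \<Rightarrow> 'a) \<Rightarrow> ('a \<Rightarrow> 'a) \<Rightarrow> bool" where
  "bounded_op sc T \<longleftrightarrow>
     (\<forall>x y. T (x + y) = T x + T y) \<and> (\<forall>a x. T (sc a x) = sc a (T x)) \<and>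
     (\<exists>C. \<forall>x. norm (T x) \<le> C * norm x)"

definition bounded_functional :: "('k::real_normed_field \<Rightarrow> 'a::banach \<Rightarrow> 'a) \<Rightarrow> ('a \<Rightarrow> 'k) \<Rightarrow> bool" where
  "bounded_functional sc f \<longleftrightarrow>
     (\<forall>x y. f (x + y) = f x + f y) \<and> (\<forall>a x. f (sc a x) = a * f x) \<and>
     (\<exists>C. \<forall>x. norm (f x) \<le> C * norm x)"

definition closed_ksubspace :: "('k::real_normed_field \<Rightarrow> 'a::banach \<Rightarrow> 'a) \<Rightarrow> 'a set \<Rightarrow> bool" where
  "closed_ksubspace sc S \<longleftrightarrow>
     0 \<in> S \<and> (\<forall>x\<in>S. \<forall>y\<in>S. x + y \<in> S) \<and> (\<forall>a. \<forall>x\<in>S. sc a x \<in> S) \<and> closed S"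

definition closed_span :: "('k::real_normed_field \<Rightarrow> 'a::banach \<Rightarrow> 'a) \<Rightarrow> 'a set set \<Rightarrow> 'a set" where
  "closed_span sc \<F> = \<Inter> {S. closed_ksubspace sc S \<and> \<Union>\<F> \<subseteq> S}"

definition subspace_lattice :: "('k::real_normed_field \<Rightarrow> 'a::banach \<Rightarrow> 'a) \<Rightarrow> 'a set set \<Rightarrow> bool" where
  "subspace_lattice sc \<L> \<longleftrightarrow>
     (\<forall>E\<in>\<L>. closed_ksubspace sc E) \<and> {0} \<in> \<L> \<and> UNIV \<in> \<L> \<and>
     (\<forall>\<F>. \<F> \<subseteq> \<L> \<longrightarrow> \<Inter>\<F> \<in> \<L> \<and> closed_span sc \<F> \<in> \<L>)"

definition alg :: "('k::real_normed_field \<Rightarrow> 'a::banach \<Rightarrow> 'a) \<Rightarrow> 'a set set \<Rightarrow> ('a \<Rightarrow> 'a) set" where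
  "alg sc \<L> = {T. bounded_op sc T \<and> (\<forall>E\<in>\<L>. T ` E \<subseteq> E)}"

definition lminus :: "('k::real_normed_field \<Rightarrow> 'a::banach \<Rightarrow> 'a) \<Rightarrow> 'a set set \<Rightarrow> 'a set \<Rightarrow> 'a set" where
  "lminus sc \<L> E = closed_span sc {F\<in>\<L>. \<not> E \<subseteq> F}"

definition Jset :: "('k::real_normed_field \<Rightarrow> 'a::banach \<Rightarrow> 'a) \<Rightarrow> 'a set set \<Rightarrow> 'a set set" where
  "Jset sc \<L> = {K\<in>\<L>. K \<noteq> {0} \<and> lminus sc \<L> K \<noteq> UNIV}"

definition annihilator :: "('k::real_normed_field \<Rightarrow> 'a::banach \<Rightarrow> 'a) \<Rightarrow> 'a set \<Rightarrow> ('a \<Rightarrow> 'k) set" where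
  "annihilator sc L = {f. bounded_functional sc f \<and> (\<forall>x\<in>L. f x = 0)}"

definition rank_one :: "('k::real_normed_field \<Rightarrow> 'a::banach \<Rightarrow> 'a) \<Rightarrow> 'a \<Rightarrow> ('a \<Rightarrow> 'k) \<Rightarrow> 'a \<Rightarrow> 'a" where
  "rank_one sc x f = (\<lambda>y. sc (f y) x)"

definition wjc_identity :: "('k::real_normed_field \<Rightarrow> 'a::banach \<Rightarrow> 'a) \<Rightarrow> nat \<Rightarrow> nat \<Rightarrow> nat \<Rightarrow>
    (('a \<Rightarrow> 'a) \<Rightarrow> ('a \<Rightarrow> 'a)) \<Rightarrow> ('a \<Rightarrow> 'a) \<Rightarrow> 'k \<Rightarrow> bool" where
  "wjc_identity sc m n l \<delta> A c \<longleftrightarrow>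
     (\<forall>y. sc (of_nat (m + n + l)) (\<delta> (A \<circ> A) y) =
          sc (of_nat m) (\<delta> A (A y)) + sc (of_nat n) (A (\<delta> A y))
          + sc (of_nat l) (A (\<delta> id (A y))) + sc c y)"

definition weak_jordan_centralizer :: "('k::real_normed_field \<Rightarrow> 'a::banach \<Rightarrow> 'a) \<Rightarrow> 'a set set \<Rightarrow>
    nat \<Rightarrow> nat \<Rightarrow> nat \<Rightarrow> (('a \<Rightarrow> 'a) \<Rightarrow> ('a \<Rightarrow> 'a)) \<Rightarrow> bool" where
  "weak_jordan_centralizer sc \<L> m n l \<delta> \<longleftrightarrow>
     (\<forall>A\<in>alg sc \<L>. \<delta> A \<in> alg sc \<L>) \<and>
     (\<forall>A\<in>alg sc \<L>. \<forall>B\<in>alg sc \<L>. \<delta> (\<lambda>y. A y + B y) = (\<lambda>y. \<delta> A y + \<delta> B y)) \<and>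
     (\<forall>a. \<forall>A\<in>alg sc \<L>. \<delta> (\<lambda>y. sc a (A y)) = (\<lambda>y. sc a (\<delta> A y))) \<and>
     (\<forall>A\<in>alg sc \<L>. \<exists>c. wjc_identity sc m n l \<delta> A c)"

end

theory Submission
  imports Defs
begin

(*
  Write D = delta(I).  Applying the defining identity to B and to B + I and
  subtracting gives, for every B in alg L, the linearised identity
      (m+n+2l) delta(B) = (m+l) D B + (n+l) B D + (lambda_{B+I} - lambda_B) I.
  For B = x (x) f the first two terms are y |-> f(y) Dx and y |-> f(Dy) x, so the
  theorem reduces to showing that x is an eigenvector of D.  Substituting the linearised
  identity back into the identity at B yields
      (m+l)(n+l) (D B^2 + B^2 D - 2 B D B)  in  span{B, I},
  and evaluating this at rank-one operators u (x) h of alg L forces D u in K u.  The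
  functionals h are obtained by separating a point from a closed subspace (E_- or L_-);
  since HOL-Analysis has no Hahn-Banach theorem for general normed spaces, it is proved
  here from Zorn's lemma.
*)

text \<open>Graphs of real-linear functionals on subspaces that extend the graph G0 and are
  dominated by p.  Zorn's lemma on this family yields the Hahn-Banach theorem.\<close>
definition dominated_graphs :: "('a::real_vector \<Rightarrow> real) \<Rightarrow> ('a \<times> real) set \<Rightarrow> ('a \<times> real) set set" where
 "dominated_graphs p G0 = {G. G0 \<subseteq> G \<and> (\<forall>x a b. (x,a)\<in>G \<longrightarrow> (x,b)\<in>G \<longrightarrow> a = b) \<and>
     (\<forall>x a y b. (x,a)\<in>G \<longrightarrow> (y,b)\<in>G \<longrightarrow> (x+y,a+b)\<in>G) \<and> (\<forall>x a r. (x,a)\<in>G \<longrightarrow> (r *\<^sub>R x, r*a)\<in>G) \<and>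
     (\<forall>x a. (x,a)\<in>G \<longrightarrow> a \<le> p x)}"

lemma dominated_graphsD:
  assumes "G \<in> dominated_graphs p G0"
  shows "G0 \<subseteq> G" "(x,a)\<in>G \<Longrightarrow> (x,b)\<in>G \<Longrightarrow> a = b" "(x,a)\<in>G \<Longrightarrow> (y,b)\<in>G \<Longrightarrow> (x+y,a+b)\<in>G"
    "(x,a)\<in>G \<Longrightarrow> (r *\<^sub>R x, r*a)\<in>G" "(x,a)\<in>G \<Longrightarrow> a \<le> p x"
  using assms unfolding dominated_graphs_def by blast+

lemma dominated_graphsI:
  assumes "G0 \<subseteq> G" "\<And>x a b. (x,a)\<in>G \<Longrightarrow> (x,b)\<in>G \<Longrightarrow> a = b"
    "\<And>x a y b. (x,a)\<in>G \<Longrightarrow> (y,b)\<in>G \<Longrightarrow> (x+y,a+b)\<in>G"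
    "\<And>x a r. (x,a)\<in>G \<Longrightarrow> (r *\<^sub>R x, r*a)\<in>G" "\<And>x a. (x,a)\<in>G \<Longrightarrow> a \<le> p x"
  shows "G \<in> dominated_graphs p G0"
  using assms unfolding dominated_graphs_def by blast

lemma dominated_graphs_chain:
  assumes G0: "G0 \<in> dominated_graphs p G0"
  shows "\<forall>C\<in>chains (dominated_graphs p G0). \<exists>U\<in>dominated_graphs p G0. \<forall>X\<in>C. X \<subseteq> U"
proof
  fix C assume C: "C \<in> chains (dominated_graphs p G0)"
  then have Cs: "C \<subseteq> dominated_graphs p G0" and ch: "\<And>A B. A \<in> C \<Longrightarrow> B \<in> C \<Longrightarrow> A \<subseteq> B \<or> B \<subseteq> A"
    unfolding chains_def chain_subset_def by auto
  show "\<exists>U\<in>dominated_graphs p G0. \<forall>X\<in>C. X \<subseteq> U"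
  proof (cases "C = {}")
    case True then show ?thesis using G0 by blast
  next
    case False
    then obtain X0 where X0: "X0 \<in> C" by blast
    have common: "\<exists>X\<in>C. (x,a) \<in> X \<and> (y,b) \<in> X" if xa: "(x,a) \<in> \<Union>C" and yb: "(y,b) \<in> \<Union>C" for x a y b
    proof -
      obtain X1 X2 where "X1 \<in> C" "X2 \<in> C" "(x,a) \<in> X1" "(y,b) \<in> X2" using xa yb by blast
      then show ?thesis using ch[of X1 X2] by blast
    qed
    have "\<Union>C \<in> dominated_graphs p G0"
    proof (rule dominated_graphsI)
      show "G0 \<subseteq> \<Union>C" using X0 Cs dominated_graphsD(1) by blast
    next
      fix x a b assume "(x,a) \<in> \<Union>C" "(x,b) \<in> \<Union>C"
      then obtain X where "X \<in> C" "(x,a) \<in> X" "(x,b) \<in> X" using common by blast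
      then show "a = b" using Cs dominated_graphsD(2) by blast
    next
      fix x a y b assume "(x,a) \<in> \<Union>C" "(y,b) \<in> \<Union>C"
      then obtain X where "X \<in> C" "(x,a) \<in> X" "(y,b) \<in> X" using common by blast
      then show "(x+y,a+b) \<in> \<Union>C" using Cs dominated_graphsD(3) by blast
    next
      fix x a r assume "(x,a) \<in> \<Union>C"
      then show "(r *\<^sub>R x, r*a) \<in> \<Union>C" using Cs dominated_graphsD(4) by blast
    next
      fix x a assume "(x,a) \<in> \<Union>C"
      then show "a \<le> p x" using Cs dominated_graphsD(5) by blast
    qed
    then show ?thesis by blast
  qed
qed

text \<open>The one-dimensional extension step: a value c for the new direction w exists
  between the lower and upper bounds forced by domination.\<close>
lemma extension_value:
  assumes padd: "\<And>x y. p (x+y) \<le> p x + p y"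
    and G: "G \<in> dominated_graphs p G0" and ne: "(0,0) \<in> G"
  shows "\<exists>c. (\<forall>x b. (x,b) \<in> G \<longrightarrow> b - p (x - w) \<le> c) \<and> (\<forall>y b. (y,b) \<in> G \<longrightarrow> c \<le> p (y + w) - b)"
proof -
  note g = dominated_graphsD[OF G]
  define V where "V = {b - p (x - w) | x b. (x,b) \<in> G}"
  have key: "b - p (x - w) \<le> p (y + w) - b'" if "(x,b) \<in> G" "(y,b') \<in> G" for x b y b'
  proof -
    have "b + b' \<le> p (x + y)" using g(3)[OF that] g(5) by blast
    also have "\<dots> \<le> p (x - w) + p (y + w)" using padd[of "x - w" "y + w"] by simp
    finally show ?thesis by simp
  qed
  have "V \<noteq> {}" unfolding V_def using ne by blast
  moreover have "bdd_above V" unfolding V_def bdd_above_def using key[OF _ ne] by auto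
  ultimately show ?thesis
    by (intro exI[of _ "Sup V"] conjI allI impI cSup_upper cSup_least)
       (use key V_def in blast)+
qed

text \<open>Domination of the extended functional, using positive homogeneity of p to rescale
  the bounds on c.\<close>
lemma extension_dominated:
  assumes phom: "\<And>x r. r > 0 \<Longrightarrow> p (r *\<^sub>R x) = r * p x"
    and G: "G \<in> dominated_graphs p G0"
    and lower: "\<And>x b. (x,b) \<in> G \<Longrightarrow> b - p (x - w) \<le> c"
    and upper: "\<And>y b. (y,b) \<in> G \<Longrightarrow> c \<le> p (y + w) - b"
    and xa: "(x,a) \<in> G"
  shows "a + t * c \<le> p (x + t *\<^sub>R w)"
proof (cases t "0::real" rule: linorder_cases)
  case equal then show ?thesis using xa dominated_graphsD(5)[OF G] by simp
next
  case greater
  have "c \<le> p ((1/t) *\<^sub>R x + w) - (1/t) * a" by (rule upper[OF dominated_graphsD(4)[OF G xa]])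
  then have "t * c \<le> t * p ((1/t) *\<^sub>R x + w) - a" using greater by (simp add: field_simps)
  also have "t * p ((1/t) *\<^sub>R x + w) = p (t *\<^sub>R ((1/t) *\<^sub>R x + w))" using phom[OF greater] by simp
  also have "t *\<^sub>R ((1/t) *\<^sub>R x + w) = x + t *\<^sub>R w" using greater by (simp add: algebra_simps)
  finally show ?thesis by simp
next
  case less
  define s where "s = - t"
  have s: "s > 0" using less unfolding s_def by simp
  have "(1/s) * a - p ((1/s) *\<^sub>R x - w) \<le> c" by (rule lower[OF dominated_graphsD(4)[OF G xa]])
  then have "a - s * p ((1/s) *\<^sub>R x - w) \<le> s * c" using s by (simp add: field_simps)
  moreover have "s * p ((1/s) *\<^sub>R x - w) = p (s *\<^sub>R ((1/s) *\<^sub>R x - w))" using phom[OF s] by simp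
  moreover have "s *\<^sub>R ((1/s) *\<^sub>R x - w) = x + t *\<^sub>R w" using s unfolding s_def by (simp add: algebra_simps)
  ultimately show ?thesis unfolding s_def by simp
qed

lemma dominated_graph_extend:
  assumes padd: "\<And>x y. p (x+y) \<le> p x + p y" and phom: "\<And>x r. r > 0 \<Longrightarrow> p (r *\<^sub>R x) = r * p x"
    and G: "G \<in> dominated_graphs p G0" and ne: "(0,0) \<in> G" and w: "\<forall>a. (w,a) \<notin> G"
  shows "\<exists>G'\<in>dominated_graphs p G0. G \<subseteq> G' \<and> G' \<noteq> G"
proof -
  note g = dominated_graphsD[OF G]
  obtain c where lower: "\<And>x b. (x,b) \<in> G \<Longrightarrow> b - p (x - w) \<le> c"
    and upper: "\<And>y b. (y,b) \<in> G \<Longrightarrow> c \<le> p (y + w) - b"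
    using extension_value[OF padd G ne] by blast
  define G' where "G' = {(x + t *\<^sub>R w, a + t * c) | x a t. (x,a) \<in> G}"
  have G'I: "(x + t *\<^sub>R w, a + t * c) \<in> G'" if "(x,a) \<in> G" for x a t
    unfolding G'_def using that by blast
  have G'E: "\<exists>x a t. z = x + t *\<^sub>R w \<and> b = a + t * c \<and> (x,a) \<in> G" if "(z,b) \<in> G'" for z b
    using that unfolding G'_def by blast
  have sub: "G \<subseteq> G'" using G'I[of _ _ 0] by auto
  have new: "(w, c) \<in> G'" using G'I[OF ne, of 1] by simp
  have diff: "(y - x, b - a) \<in> G" if "(x,a) \<in> G" "(y,b) \<in> G" for x a y b
    using g(3)[OF that(2) g(4)[OF that(1), of "-1"]] by simp
  have "G' \<in> dominated_graphs p G0"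
  proof (rule dominated_graphsI)
    show "G0 \<subseteq> G'" using g(1) sub by blast
  next
    fix z a b assume "(z,a) \<in> G'" "(z,b) \<in> G'"
    then obtain x1 a1 t1 x2 a2 t2 where 1: "z = x1 + t1 *\<^sub>R w" "a = a1 + t1 * c" "(x1,a1) \<in> G"
      and 2: "z = x2 + t2 *\<^sub>R w" "b = a2 + t2 * c" "(x2,a2) \<in> G" using G'E by meson
    show "a = b"
    proof (cases "t1 = t2")
      case True
      then show ?thesis using 1 2 g(2) by auto
    next
      case False
      have "x2 - x1 = (t1 - t2) *\<^sub>R w" using 1(1) 2(1) by (simp add: algebra_simps)
      then have "(w, (1 / (t1 - t2)) * (a2 - a1)) \<in> G"
        using g(4)[OF diff[OF 1(3) 2(3)], of "1 / (t1 - t2)"] False by simp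
      then show ?thesis using w by blast
    qed
  next
    fix z a y b assume "(z,a) \<in> G'" "(y,b) \<in> G'"
    then obtain x1 a1 t1 x2 a2 t2 where 1: "z = x1 + t1 *\<^sub>R w" "a = a1 + t1 * c" "(x1,a1) \<in> G"
      and 2: "y = x2 + t2 *\<^sub>R w" "b = a2 + t2 * c" "(x2,a2) \<in> G" using G'E by meson
    have "z + y = (x1 + x2) + (t1 + t2) *\<^sub>R w" "a + b = (a1 + a2) + (t1 + t2) * c"
      using 1 2 by (simp_all add: algebra_simps)
    then show "(z + y, a + b) \<in> G'" using G'I[OF g(3)[OF 1(3) 2(3)], of "t1 + t2"] by simp
  next
    fix z a r assume "(z,a) \<in> G'"
    then obtain x1 a1 t1 where 1: "z = x1 + t1 *\<^sub>R w" "a = a1 + t1 * c" "(x1,a1) \<in> G" using G'E by meson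
    have "r *\<^sub>R z = r *\<^sub>R x1 + (r * t1) *\<^sub>R w" "r * a = r * a1 + (r * t1) * c"
      using 1 by (simp_all add: algebra_simps)
    then show "(r *\<^sub>R z, r * a) \<in> G'" using G'I[OF g(4)[OF 1(3), of r], of "r * t1"] by simp
  next
    fix z a assume "(z,a) \<in> G'"
    then obtain x1 a1 t1 where 1: "z = x1 + t1 *\<^sub>R w" "a = a1 + t1 * c" "(x1,a1) \<in> G" using G'E by meson
    show "a \<le> p z" using extension_dominated[OF phom G lower upper 1(3)] 1 by simp
  qed
  then show ?thesis using sub new w by blast
qed

lemma hahn_banach_real:
  assumes padd: "\<And>x y. p (x+y) \<le> p x + p y" and phom: "\<And>x r. r > 0 \<Longrightarrow> p (r *\<^sub>R x) = r * p x"
    and G0: "G0 \<in> dominated_graphs p G0" and ne: "(0,0) \<in> G0"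
  shows "\<exists>H. (\<forall>x y. H (x+y) = H x + H y) \<and> (\<forall>r x. H (r *\<^sub>R x) = r * H x) \<and> (\<forall>x. H x \<le> p x)
     \<and> (\<forall>x a. (x,a) \<in> G0 \<longrightarrow> H x = a)"
proof -
  obtain G where G: "G \<in> dominated_graphs p G0" and max: "\<forall>X\<in>dominated_graphs p G0. G \<subseteq> X \<longrightarrow> X = G"
    using Zorn_Lemma2[OF dominated_graphs_chain[OF G0]] by blast
  note g = dominated_graphsD[OF G]
  have total: "\<exists>a. (x,a) \<in> G" for x
    using dominated_graph_extend[OF padd phom G, of x] ne g(1) max by blast
  define H where "H x = (THE a. (x,a) \<in> G)" for x
  have Hx: "(x, H x) \<in> G" for x
    unfolding H_def by (rule theI') (use total g(2) in blast)
  have Hu: "(x,a) \<in> G \<Longrightarrow> H x = a" for x a using Hx g(2) by blast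
  show ?thesis
  proof (intro exI[of _ H] conjI allI impI)
    show "H (x + y) = H x + H y" for x y by (rule Hu[OF g(3)[OF Hx Hx]])
    show "H (r *\<^sub>R x) = r * H x" for r x by (rule Hu[OF g(4)[OF Hx]])
    show "H x \<le> p x" for x by (rule g(5)[OF Hx])
    show "H x = a" if "(x,a) \<in> G0" for x a using Hu g(1) that by blast
  qed
qed

lemma line_graph_dominated:
  fixes M :: "'a::real_vector set"
  assumes Madd: "\<And>x y. x\<in>M \<Longrightarrow> y\<in>M \<Longrightarrow> x+y \<in> M" and Msc: "\<And>r x. x\<in>M \<Longrightarrow> r *\<^sub>R x \<in> M"
    and u: "u \<notin> M" and dom: "\<And>m t. m \<in> M \<Longrightarrow> t \<le> p (m + t *\<^sub>R u)"
    and G0_def: "G0 = {(m + t *\<^sub>R u, t) | m t. m \<in> M}"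
  shows "G0 \<in> dominated_graphs p G0"
proof -
  have G0I: "(m + t *\<^sub>R u, t) \<in> G0" if "m \<in> M" for m t unfolding G0_def using that by blast
  have G0E: "\<exists>m. z = m + a *\<^sub>R u \<and> m \<in> M" if "(z,a) \<in> G0" for z a using that unfolding G0_def by blast
  show ?thesis
  proof (rule dominated_graphsI)
    fix z a b assume "(z,a) \<in> G0" "(z,b) \<in> G0"
    then obtain m1 m2 where 1: "z = m1 + a *\<^sub>R u" "m1 \<in> M" and 2: "z = m2 + b *\<^sub>R u" "m2 \<in> M"
      using G0E by meson
    show "a = b"
    proof (rule ccontr)
      assume ab: "a \<noteq> b"
      have "m2 - m1 = (a - b) *\<^sub>R u" using 1 2 by (simp add: algebra_simps)
      then have "(1/(a-b)) *\<^sub>R (m2 + (-1) *\<^sub>R m1) = u" using ab by simp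
      moreover have "(1/(a-b)) *\<^sub>R (m2 + (-1) *\<^sub>R m1) \<in> M" using Msc Madd 1(2) 2(2) by blast
      ultimately show False using u by simp
    qed
  next
    fix z a y b assume "(z,a) \<in> G0" "(y,b) \<in> G0"
    then obtain m1 m2 where 1: "z = m1 + a *\<^sub>R u" "m1 \<in> M" and 2: "y = m2 + b *\<^sub>R u" "m2 \<in> M"
      using G0E by meson
    have "z + y = (m1 + m2) + (a + b) *\<^sub>R u" using 1 2 by (simp add: algebra_simps)
    then show "(z + y, a + b) \<in> G0" using G0I[OF Madd[OF 1(2) 2(2)], of "a + b"] by simp
  next
    fix z a r assume "(z,a) \<in> G0"
    then obtain m1 where 1: "z = m1 + a *\<^sub>R u" "m1 \<in> M" using G0E by meson
    have "r *\<^sub>R z = r *\<^sub>R m1 + (r * a) *\<^sub>R u" using 1 by (simp add: algebra_simps)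
    then show "(r *\<^sub>R z, r * a) \<in> G0" using G0I[OF Msc[OF 1(2), of r], of "r * a"] by simp
  next
    fix z a assume "(z,a) \<in> G0"
    then show "a \<le> p z" using G0E dom by blast
  qed simp
qed

text \<open>Separation in a real normed space: a point u outside a closed subspace M is
  separated from M by a bounded real-linear functional H with H(M) = 0 and H u = 1.
  The dominating seminorm is norm / d, where d > 0 is the distance from u to M.\<close>
lemma real_separation:
  fixes M :: "'a::real_normed_vector set"
  assumes M0: "0 \<in> M" and Madd: "\<And>x y. x\<in>M \<Longrightarrow> y\<in>M \<Longrightarrow> x+y \<in> M"
    and Msc: "\<And>r x. x\<in>M \<Longrightarrow> r *\<^sub>R x \<in> M" and Mc: "closed M" and u: "u \<notin> M"
  shows "\<exists>H C. (\<forall>x y. H(x+y) = H x + H y) \<and> (\<forall>r x. H (r *\<^sub>R x) = r * H x) \<and> (\<forall>x. \<bar>H x\<bar> \<le> C * norm x)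
     \<and> (\<forall>x\<in>M. H x = 0) \<and> H u = 1"
proof -
  define d where "d = infdist u M"
  have d: "d > 0" unfolding d_def using infdist_pos_not_in_closed[OF Mc _ u] M0 by blast
  define p where "p z = norm z / d" for z :: 'a
  have padd: "p (x+y) \<le> p x + p y" for x y
    unfolding p_def using norm_triangle_ineq[of x y] d by (simp add: divide_right_mono add_divide_distrib[symmetric])
  have phom: "p (r *\<^sub>R x) = r * p x" if "r > 0" for x r unfolding p_def using that by simp
  have dom: "t \<le> p (m + t *\<^sub>R u)" if m: "m \<in> M" for m t
  proof (cases "t > 0")
    case False then show ?thesis unfolding p_def using d by (simp add: not_less order_trans[OF _ divide_nonneg_pos[OF norm_ge_zero d]])
  next
    case True
    have "d \<le> dist u (- ((1/t) *\<^sub>R m))" unfolding d_def by (rule infdist_le) (use Msc[OF m, of "-(1/t)"] in simp)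
    also have "\<dots> = norm (u + (1/t) *\<^sub>R m)" by (simp add: dist_norm)
    finally have "t * d \<le> t * norm (u + (1/t) *\<^sub>R m)" using True by simp
    also have "t * norm (u + (1/t) *\<^sub>R m) = norm (t *\<^sub>R (u + (1/t) *\<^sub>R m))" using True by simp
    also have "t *\<^sub>R (u + (1/t) *\<^sub>R m) = m + t *\<^sub>R u" using True by (simp add: algebra_simps)
    finally show ?thesis unfolding p_def using d by (simp add: field_simps)
  qed
  define G0 where "G0 = {(m + t *\<^sub>R u, t) | m t. m \<in> M}"
  have G0I: "(m + t *\<^sub>R u, t) \<in> G0" if "m \<in> M" for m t unfolding G0_def using that by blast
  obtain H where H: "\<forall>x y. H (x+y) = H x + H y" "\<forall>r x. H (r *\<^sub>R x) = r * H x" "\<forall>x. H x \<le> p x"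
     "\<forall>x a. (x,a) \<in> G0 \<longrightarrow> H x = a"
    using hahn_banach_real[OF padd phom line_graph_dominated[OF Madd Msc u dom G0_def]] G0I[OF M0, of 0]
    by auto
  have "\<bar>H x\<bar> \<le> (1/d) * norm x" for x
    using H(3)[rule_format, of x] H(3)[rule_format, of "(-1) *\<^sub>R x"] H(2)[rule_format, of "-1" x]
    unfolding p_def by simp
  moreover have "\<forall>x\<in>M. H x = 0" using H(4) G0I[of _ 0] by simp
  moreover have "H u = 1" using H(4) G0I[OF M0, of 1] by simp
  ultimately show ?thesis using H(1,2) by blast
qed

text \<open>The only information about the scalar field used below: either every scalar is real,
  or there is an imaginary unit ik with every scalar of the form s + ik t (s, t real).\<close>
lemma real_or_complex_cases:
  assumes "real_or_complex TYPE('k::real_normed_field)"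
  obtains "\<forall>a::'k::real_normed_field. \<exists>r. a = of_real r"
  | ik :: "'k::real_normed_field" where "ik * ik = -1" "\<forall>a. \<exists>s t. a = of_real s + ik * of_real t"
proof -
  obtain \<phi> :: "'k \<Rightarrow> complex" where inj: "inj \<phi>"
    and hom: "\<And>a b. \<phi> (a + b) = \<phi> a + \<phi> b \<and> \<phi> (a * b) = \<phi> a * \<phi> b"
    and phr: "\<And>r. \<phi> (of_real r) = complex_of_real r"
    and rng: "range \<phi> = range complex_of_real \<or> range \<phi> = UNIV"
    using assms unfolding real_or_complex_def by blast
  from rng show thesis
  proof
    assume R: "range \<phi> = range complex_of_real"
    have "\<exists>r. a = of_real r" for a :: 'k
    proof -
      obtain r where "\<phi> a = \<phi> (of_real r)" using R phr by (metis rangeE rangeI)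
      then show ?thesis using inj unfolding inj_def by blast
    qed
    then show thesis using that(1) by blast
  next
    assume "range \<phi> = UNIV"
    then obtain ik where ik: "\<phi> ik = \<i>" by (metis UNIV_I image_iff)
    have "\<phi> (ik * ik) = \<phi> (-1)" using hom ik phr[of "-1"] by simp
    then have "ik * ik = -1" using inj unfolding inj_def by simp
    moreover have "a = of_real (Re (\<phi> a)) + ik * of_real (Im (\<phi> a))" for a :: 'k
    proof -
      have "\<phi> (of_real (Re (\<phi> a)) + ik * of_real (Im (\<phi> a))) = \<phi> a"
        using hom phr ik by (simp add: complex_eq[symmetric] mult.commute)
      then show ?thesis using inj unfolding inj_def by metis
    qed
    ultimately show thesis using that(2) by blast
  qed
qed

locale scalar_space =
  fixes sc :: "'k::real_normed_field \<Rightarrow> 'a::banach \<Rightarrow> 'a"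
  assumes scalar: "scalar_structure sc"
begin

lemma sc_add_right: "sc a (x + y) = sc a x + sc a y" using scalar unfolding scalar_structure_def by blast
lemma sc_add_left: "sc (a + b) x = sc a x + sc b x" using scalar unfolding scalar_structure_def by blast
lemma sc_sc: "sc a (sc b x) = sc (a * b) x" using scalar unfolding scalar_structure_def by blast
lemma sc_one: "sc 1 x = x" using scalar unfolding scalar_structure_def by blast
lemma sc_real: "sc (of_real r) x = r *\<^sub>R x" using scalar unfolding scalar_structure_def by blast
lemma sc_norm: "norm (sc a x) = norm a * norm x" using scalar unfolding scalar_structure_def by blast

sublocale M: module sc
  by standard (auto simp: sc_add_right sc_add_left sc_sc sc_one)

lemma sc_nat: "sc (of_nat k) x = real k *\<^sub>R x"
  using sc_real[of "real k" x] by simp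

lemma sc_eq_0_iff: "sc a x = 0 \<longleftrightarrow> a = 0 \<or> x = 0"
  using sc_norm[of a x] by (metis M.scale_zero_left M.scale_zero_right mult_eq_0_iff norm_eq_zero)

lemma sc_solve: "sc c v = sc k u \<Longrightarrow> c \<noteq> 0 \<Longrightarrow> v = sc (k / c) u"
proof -
  assume e: "sc c v = sc k u" and c: "c \<noteq> 0"
  have "sc (inverse c) (sc c v) = sc (inverse c) (sc k u)" using e by simp
  then show ?thesis using c by (simp add: field_simps)
qed

lemma cks_0: "closed_ksubspace sc S \<Longrightarrow> 0 \<in> S" unfolding closed_ksubspace_def by blast
lemma cks_add: "closed_ksubspace sc S \<Longrightarrow> x \<in> S \<Longrightarrow> y \<in> S \<Longrightarrow> x + y \<in> S" unfolding closed_ksubspace_def by blast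
lemma cks_sc: "closed_ksubspace sc S \<Longrightarrow> x \<in> S \<Longrightarrow> sc a x \<in> S" unfolding closed_ksubspace_def by blast
lemma cks_closed: "closed_ksubspace sc S \<Longrightarrow> closed S" unfolding closed_ksubspace_def by blast

lemma bf_add: "bounded_functional sc h \<Longrightarrow> h (x + y) = h x + h y" unfolding bounded_functional_def by blast
lemma bf_sc: "bounded_functional sc h \<Longrightarrow> h (sc a x) = a * h x" unfolding bounded_functional_def by blast
lemma bf_bound: "bounded_functional sc h \<Longrightarrow> \<exists>C. \<forall>x. norm (h x) \<le> C * norm x"
  unfolding bounded_functional_def by (erule conjunct2[THEN conjunct2])
lemma bf_0: "bounded_functional sc h \<Longrightarrow> h 0 = 0"
  using bf_sc[of h 0 0] by simp

lemma bf_divide: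
  assumes h: "bounded_functional sc h"
  shows "bounded_functional sc (\<lambda>z. h z / c)"
proof -
  obtain C where "\<And>x. norm (h x) \<le> C * norm x" using bf_bound[OF h] by blast
  then have bound: "norm (h x / c) \<le> (C / norm c) * norm x" for x
    by (simp add: norm_divide divide_right_mono)
  show ?thesis unfolding bounded_functional_def
  proof (intro conjI allI exI[of _ "C / norm c"])
    show "h (x + y) / c = h x / c + h y / c" for x y by (simp add: bf_add[OF h] add_divide_distrib)
    show "h (sc a x) / c = a * (h x / c)" for a x by (simp add: bf_sc[OF h])
  qed (rule bound)
qed

lemma complexified_functional:
  assumes ik: "ik * ik = -1" and dec: "\<And>a. \<exists>s t. a = of_real s + ik * of_real t"
    and Hadd: "\<And>x y. H (x + y) = H x + H y" and Hreal: "\<And>r x. H (r *\<^sub>R x) = r * H x"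
    and Hbound: "\<And>x. \<bar>H x\<bar> \<le> C * norm x"
  shows "bounded_functional sc (\<lambda>z. of_real (H z) - ik * of_real (H (sc ik z)))"
proof -
  define g where "g z = of_real (H z) - ik * of_real (H (sc ik z))" for z
  have nik: "norm ik = 1"
  proof -
    have "(norm ik)\<^sup>2 = 1" using arg_cong[OF ik, of norm] by (simp add: norm_mult power2_eq_square)
    then show ?thesis using norm_ge_zero[of ik] by (simp add: power2_eq_1_iff)
  qed
  have Hsc_real: "H (sc (of_real r) x) = r * H x" for r x using Hreal unfolding sc_real .
  have g_add: "g (x + y) = g x + g y" for x y unfolding g_def sc_add_right Hadd by (simp add: algebra_simps)
  have g_real: "g (sc (of_real r) z) = of_real r * g z" for r z
  proof -
    have "sc ik (sc (of_real r) z) = sc (of_real r) (sc ik z)" unfolding sc_sc by (simp add: mult.commute)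
    then have "g (sc (of_real r) z) = of_real (r * H z) - ik * of_real (r * H (sc ik z))"
      by (simp only: g_def Hsc_real)
    then show ?thesis unfolding g_def by (simp add: algebra_simps)
  qed
  have g_ik: "g (sc ik z) = ik * g z" for z
  proof -
    have "sc ik (sc ik z) = sc (of_real (-1)) z" unfolding sc_sc ik by simp
    then have "H (sc ik (sc ik z)) = - H z" using Hsc_real[of "-1" z] by simp
    then show ?thesis unfolding g_def by (simp add: algebra_simps ik mult.assoc[symmetric])
  qed
  have g_sc: "g (sc a z) = a * g z" for a z
  proof -
    obtain s t where a: "a = of_real s + ik * of_real t" using dec by blast
    have "sc a z = sc (of_real s) z + sc ik (sc (of_real t) z)" unfolding a sc_add_left sc_sc ..
    then have "g (sc a z) = of_real s * g z + ik * (of_real t * g z)" by (simp only: g_add g_real g_ik)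
    then show ?thesis unfolding a by (simp add: algebra_simps)
  qed
  have "norm (g x) \<le> 2 * C * norm x" for x
  proof -
    have "norm (g x) \<le> norm (of_real (H x) :: 'k) + norm (ik * of_real (H (sc ik x)))"
      unfolding g_def by (rule norm_triangle_ineq4)
    also have "\<dots> = \<bar>H x\<bar> + \<bar>H (sc ik x)\<bar>" by (simp add: nik norm_mult)
    also have "\<dots> \<le> C * norm x + C * norm (sc ik x)" using Hbound by (meson add_mono)
    also have "\<dots> = 2 * C * norm x" unfolding sc_norm nik by simp
    finally show ?thesis .
  qed
  then show ?thesis unfolding bounded_functional_def g_def[symmetric] using g_add g_sc by blast
qed

lemma scalar_separation:
  assumes rc: "real_or_complex TYPE('k)" and M: "closed_ksubspace sc M" and u: "u \<notin> M"
  shows "\<exists>g. bounded_functional sc g \<and> (\<forall>z\<in>M. g z = 0) \<and> g u = 1"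
proof -
  have Mreal: "x \<in> M \<Longrightarrow> r *\<^sub>R x \<in> M" for r x using cks_sc[OF M, of x "of_real r"] unfolding sc_real .
  obtain H C where Hadd: "\<And>x y. H (x + y) = H x + H y" and Hreal: "\<And>r x. H (r *\<^sub>R x) = r * H x"
    and Hbound: "\<And>x. \<bar>H x\<bar> \<le> C * norm x" and HM: "\<forall>x\<in>M. H x = 0" and Hu: "H u = 1"
    using real_separation[of M u, OF cks_0[OF M] cks_add[OF M] Mreal cks_closed[OF M] u] by blast
  show ?thesis
  proof (cases rule: real_or_complex_cases[OF rc])
    case 1
    define g where "g z = (of_real (H z) :: 'k)" for z
    have "g (sc a x) = a * g x" for a x
    proof -
      obtain r where a: "a = of_real r" using 1 by blast
      show ?thesis unfolding g_def a sc_real Hreal by simp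
    qed
    then have "bounded_functional sc g"
      unfolding bounded_functional_def g_def using Hadd Hbound by (auto intro!: exI[of _ C])
    then show ?thesis using HM Hu by (intro exI[of _ g]) (simp add: g_def)
  next
    case (2 ik)
    define g0 where "g0 z = (of_real (H z) :: 'k) - ik * of_real (H (sc ik z))" for z
    have g0: "bounded_functional sc g0"
      unfolding g0_def by (rule complexified_functional[OF 2(1) _ Hadd Hreal Hbound]) (use 2(2) in blast)
    have g0u: "g0 u \<noteq> 0"
    proof
      assume "g0 u = 0"
      then have e: "ik * of_real (H (sc ik u)) = 1" unfolding g0_def Hu by simp
      define h where "h = H (sc ik u)"
      have "ik = - of_real h" using arg_cong[OF e, of "(*) ik"] 2(1) unfolding h_def
        by (simp add: mult.assoc[symmetric])
      then have "of_real (h * h) = (of_real (-1) :: 'k)" using 2(1) by simp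
      then have "h * h = -1" by (simp only: of_real_eq_iff)
      then show False using zero_le_square[of h] by linarith
    qed
    have "\<forall>z\<in>M. g0 z = 0" unfolding g0_def using HM cks_sc[OF M] by simp
    moreover have "bounded_functional sc (\<lambda>z. g0 z / g0 u)" by (rule bf_divide[OF g0])
    ultimately show ?thesis using g0u by (intro exI[of _ "\<lambda>z. g0 z / g0 u"]) simp
  qed
qed

lemma closed_span_ksubspace: "closed_ksubspace sc (closed_span sc F)"
  unfolding closed_span_def closed_ksubspace_def by (auto intro!: closed_Inter)

lemma closed_span_upper: "\<Union>F \<subseteq> closed_span sc F"
  unfolding closed_span_def by blast

lemma lminus_ksubspace: "closed_ksubspace sc (lminus sc L E)"
  unfolding lminus_def by (rule closed_span_ksubspace)

lemma lminus_upper: "F \<in> L \<Longrightarrow> \<not> E \<subseteq> F \<Longrightarrow> F \<subseteq> lminus sc L E"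
  unfolding lminus_def using closed_span_upper[of "{F \<in> L. \<not> E \<subseteq> F}"] by blast

lemma contains_of_not_in_lminus:
  assumes "F \<in> L" "K \<subseteq> F" "\<not> K \<subseteq> lminus sc L E"
  shows "E \<subseteq> F"
  using lminus_upper[of F L E] assms by blast

lemma bo_add: "bounded_op sc T \<Longrightarrow> T (x + y) = T x + T y" unfolding bounded_op_def by blast
lemma bo_sc: "bounded_op sc T \<Longrightarrow> T (sc a x) = sc a (T x)" unfolding bounded_op_def by blast
lemma alg_bo: "T \<in> alg sc L \<Longrightarrow> bounded_op sc T" unfolding alg_def by blast
lemma alg_invariant: "T \<in> alg sc L \<Longrightarrow> F \<in> L \<Longrightarrow> x \<in> F \<Longrightarrow> T x \<in> F" unfolding alg_def by blast

lemma alg_linear_add: "A \<in> alg sc L \<Longrightarrow> A (x + y) = A x + A y" using bo_add[OF alg_bo] .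
lemma alg_linear_sc: "A \<in> alg sc L \<Longrightarrow> A (sc a x) = sc a (A x)" using bo_sc[OF alg_bo] .
lemma alg_linear_real: "A \<in> alg sc L \<Longrightarrow> A (r *\<^sub>R x) = r *\<^sub>R A x"
  using alg_linear_sc[of A L "of_real r" x] by (simp add: sc_real)
lemma alg_zero: "A \<in> alg sc L \<Longrightarrow> A 0 = 0"
  using alg_linear_sc[of A L 0 0] by simp

lemma bo_bound_nonneg: "bounded_op sc T \<Longrightarrow> \<exists>C\<ge>0. \<forall>x. norm (T x) \<le> C * norm x"
proof -
  assume "bounded_op sc T"
  then obtain C where C: "\<And>x. norm (T x) \<le> C * norm x" unfolding bounded_op_def by blast
  have "norm (T x) \<le> max C 0 * norm x" for x
    using C[of x] mult_right_mono[OF max.cobounded1[of C 0] norm_ge_zero[of x]] by linarith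
  then show ?thesis by (intro exI[of _ "max C 0"]) simp
qed

lemma id_alg: "id \<in> alg sc L"
  unfolding alg_def bounded_op_def by (auto intro!: exI[of _ 1])

lemma alg_add:
  assumes A: "A \<in> alg sc L" and B: "B \<in> alg sc L" and lat: "subspace_lattice sc L"
  shows "(\<lambda>y. A y + B y) \<in> alg sc L"
proof -
  obtain C1 where C1: "\<And>x. norm (A x) \<le> C1 * norm x" using alg_bo[OF A] unfolding bounded_op_def by blast
  obtain C2 where C2: "\<And>x. norm (B x) \<le> C2 * norm x" using alg_bo[OF B] unfolding bounded_op_def by blast
  have bound: "norm (A x + B x) \<le> (C1 + C2) * norm x" for x
    using norm_triangle_ineq[of "A x" "B x"] C1[of x] C2[of x] by (simp add: distrib_right)
  have "bounded_op sc (\<lambda>y. A y + B y)"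
    unfolding bounded_op_def
  proof (intro conjI allI exI[of _ "C1 + C2"])
    show "A (x + y) + B (x + y) = A x + B x + (A y + B y)" for x y
      by (simp add: alg_linear_add[OF A] alg_linear_add[OF B] add_ac)
    show "A (sc a x) + B (sc a x) = sc a (A x + B x)" for a x
      by (simp add: alg_linear_sc[OF A] alg_linear_sc[OF B] M.scale_right_distrib)
  qed (rule bound)
  moreover have "A y + B y \<in> F" if F: "F \<in> L" and y: "y \<in> F" for F y
  proof -
    have "closed_ksubspace sc F" using lat F unfolding subspace_lattice_def by blast
    then show ?thesis using cks_add alg_invariant[OF A F y] alg_invariant[OF B F y] by blast
  qed
  ultimately show ?thesis unfolding alg_def by blast
qed

lemma alg_comp:
  assumes A: "A \<in> alg sc L" and B: "B \<in> alg sc L"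
  shows "(\<lambda>y. A (B y)) \<in> alg sc L"
proof -
  obtain C1 where "C1 \<ge> 0" and C1: "\<And>x. norm (A x) \<le> C1 * norm x" using bo_bound_nonneg[OF alg_bo[OF A]] by blast
  obtain C2 where C2: "\<And>x. norm (B x) \<le> C2 * norm x" using bo_bound_nonneg[OF alg_bo[OF B]] by blast
  have bound: "norm (A (B x)) \<le> (C1 * C2) * norm x" for x
    using C1[of "B x"] mult_left_mono[OF C2 \<open>C1 \<ge> 0\<close>, of x] by (simp add: mult.assoc)
  have "bounded_op sc (\<lambda>y. A (B y))"
    unfolding bounded_op_def
  proof (intro conjI allI exI[of _ "C1 * C2"])
    show "A (B (x + y)) = A (B x) + A (B y)" for x y by (simp add: alg_linear_add[OF A] alg_linear_add[OF B])
    show "A (B (sc a x)) = sc a (A (B x))" for a x by (simp add: alg_linear_sc[OF A] alg_linear_sc[OF B])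
  qed (rule bound)
  then show ?thesis using assms alg_invariant unfolding alg_def by blast
qed

lemma rank_one_bounded:
  assumes "bounded_functional sc h"
  shows "bounded_op sc (rank_one sc u h)"
proof -
  obtain C where C: "\<And>x. norm (h x) \<le> C * norm x" using bf_bound[OF assms] by blast
  have bound: "norm (rank_one sc u h x) \<le> (C * norm u) * norm x" for x
  proof -
    have "norm (rank_one sc u h x) = norm (h x) * norm u" by (simp add: rank_one_def sc_norm)
    also have "\<dots> \<le> (C * norm x) * norm u" by (rule mult_right_mono[OF C norm_ge_zero])
    finally show ?thesis by (simp add: algebra_simps)
  qed
  show ?thesis unfolding bounded_op_def
  proof (intro conjI allI exI[of _ "C * norm u"])
    show "rank_one sc u h (x + y) = rank_one sc u h x + rank_one sc u h y" for x y
      by (simp add: rank_one_def bf_add[OF assms] M.scale_left_distrib)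
    show "rank_one sc u h (sc a x) = sc a (rank_one sc u h x)" for a x
      by (simp add: rank_one_def bf_sc[OF assms])
  qed (rule bound)
qed

text \<open>u \<otimes> h lies in alg L when u \<in> E, h annihilates K_-, and every member of L containing
  K contains E: members containing K contain u, the others lie in K_- and are killed by h.\<close>
lemma rank_one_alg:
  assumes lat: "subspace_lattice sc L" and u: "u \<in> E" and h: "h \<in> annihilator sc (lminus sc L K)"
    and sub: "\<And>F. F \<in> L \<Longrightarrow> K \<subseteq> F \<Longrightarrow> E \<subseteq> F"
  shows "rank_one sc u h \<in> alg sc L"
proof -
  have hb: "bounded_functional sc h" and hz: "\<forall>z\<in>lminus sc L K. h z = 0"
    using h unfolding annihilator_def by auto
  have "rank_one sc u h y \<in> F" if F: "F \<in> L" and y: "y \<in> F" for F y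
  proof -
    have cks: "closed_ksubspace sc F" using lat F unfolding subspace_lattice_def by blast
    show ?thesis
    proof (cases "K \<subseteq> F")
      case True
      then show ?thesis unfolding rank_one_def using cks_sc[OF cks] sub[OF F] u by blast
    next
      case False
      then have "h y = 0" using lminus_upper[OF F] hz y by blast
      then show ?thesis unfolding rank_one_def using cks_0[OF cks] by simp
    qed
  qed
  then show ?thesis unfolding alg_def using rank_one_bounded[OF hb] by blast
qed

end

text \<open>Linear algebra behind the linearised identity: the defining identity at B + I
  (first hypothesis, expanded) minus the identity at B (second hypothesis).  Here a1 = delta(B^2),
  a2 = delta(B), a3 = D, a4 = delta(B)B, a5 = DB, a6 = B delta(B), a7 = BD, a8 = BDB.\<close>
lemma linearisation_algebra:
  fixes a1 a2 a3 a4 a5 a6 a7 a8 s0 s1 :: "'v::real_vector" and m n l :: real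
  assumes H1: "(m+n+l) *\<^sub>R (a1 + a2 + a2 + a3) = m *\<^sub>R (a4 + a2 + a5 + a3) + n *\<^sub>R (a6 + a7 + a2 + a3)
     + l *\<^sub>R (a8 + a7 + a5 + a3) + s1"
    and H0: "(m+n+l) *\<^sub>R a1 = m *\<^sub>R a4 + n *\<^sub>R a6 + l *\<^sub>R a8 + s0"
  shows "(m+n+2*l) *\<^sub>R a2 = (m+l) *\<^sub>R a5 + (n+l) *\<^sub>R a7 + (s1 - s0)"
proof -
  define c where "c = m+n+l"
  have H1': "c *\<^sub>R a1 + c *\<^sub>R a2 + c *\<^sub>R a2 + c *\<^sub>R a3 = m *\<^sub>R (a4 + a2 + a5 + a3) + n *\<^sub>R (a6 + a7 + a2 + a3)
     + l *\<^sub>R (a8 + a7 + a5 + a3) + s1" using H1 unfolding c_def[symmetric] by (simp only: scaleR_add_right)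
  have H0': "c *\<^sub>R a1 = m *\<^sub>R a4 + n *\<^sub>R a6 + l *\<^sub>R a8 + s0" using H0 unfolding c_def .
  have "c *\<^sub>R a2 + c *\<^sub>R a2 + c *\<^sub>R a3 = (m+n) *\<^sub>R a2 + (m+l) *\<^sub>R a5 + (n+l) *\<^sub>R a7 + (m+n+l) *\<^sub>R a3 + (s1 - s0)"
    using H1' H0' by (simp add: algebra_simps)
  then have "c *\<^sub>R a2 + c *\<^sub>R a2 - (m+n) *\<^sub>R a2 = (m+l) *\<^sub>R a5 + (n+l) *\<^sub>R a7 + (s1 - s0)"
    unfolding c_def by (simp add: algebra_simps)
  moreover have "c *\<^sub>R a2 + c *\<^sub>R a2 - (m+n) *\<^sub>R a2 = (m+n+2*l) *\<^sub>R a2"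
    unfolding c_def by (simp add: scaleR_diff_left[symmetric] scaleR_add_left[symmetric])
  ultimately show ?thesis by simp
qed

text \<open>Linear algebra behind the commutator identity: the linearised identity for B^2 (F2),
  for delta(B) B (F3) and B delta(B) (F4), substituted into the identity at B (H).  Here
  a1 = delta(B^2), a4 = delta(B)B, a6 = B delta(B), V1 = DB^2, V2 = BDB, V3 = B^2D.\<close>
lemma commutator_algebra:
  fixes a1 a4 a6 V1 V2 V3 t2 tB tl :: "'v::real_vector" and m n l :: real
  assumes F2: "(m+n+2*l) *\<^sub>R a1 = (m+l) *\<^sub>R V1 + (n+l) *\<^sub>R V3 + t2"
    and F3: "(m+n+2*l) *\<^sub>R a4 = (m+l) *\<^sub>R V1 + (n+l) *\<^sub>R V2 + tB"
    and F4: "(m+n+2*l) *\<^sub>R a6 = (m+l) *\<^sub>R V2 + (n+l) *\<^sub>R V3 + tB"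
    and H: "(m+n+l) *\<^sub>R a1 = m *\<^sub>R a4 + n *\<^sub>R a6 + l *\<^sub>R V2 + tl"
  shows "((m+l)*(n+l)) *\<^sub>R (V1 + V3 - 2 *\<^sub>R V2) = (m+n) *\<^sub>R tB + ((m+n+2*l) *\<^sub>R tl - (m+n+l) *\<^sub>R t2)"
proof -
  define k N p q where "k = m+n+2*l" and "N = m+n+l" and "p = m+l" and "q = n+l"
  have "k *\<^sub>R ((m+n+l) *\<^sub>R a1) = k *\<^sub>R (m *\<^sub>R a4 + n *\<^sub>R a6 + l *\<^sub>R V2 + tl)" using H by simp
  then have "N *\<^sub>R (k *\<^sub>R a1) = m *\<^sub>R (k *\<^sub>R a4) + n *\<^sub>R (k *\<^sub>R a6) + (k*l) *\<^sub>R V2 + k *\<^sub>R tl"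
    unfolding N_def by (simp only: scaleR_add_right scaleR_scaleR mult.commute)
  then have "N *\<^sub>R (p *\<^sub>R V1 + q *\<^sub>R V3 + t2) = m *\<^sub>R (p *\<^sub>R V1 + q *\<^sub>R V2 + tB) + n *\<^sub>R (p *\<^sub>R V2 + q *\<^sub>R V3 + tB) + (k*l) *\<^sub>R V2 + k *\<^sub>R tl"
    using F2 F3 F4 unfolding k_def p_def q_def by simp
  then have "(N*p) *\<^sub>R V1 + (N*q) *\<^sub>R V3 + N *\<^sub>R t2 = (m*p) *\<^sub>R V1 + (m*q + n*p + k*l) *\<^sub>R V2 + (n*q) *\<^sub>R V3 + (m+n) *\<^sub>R tB + k *\<^sub>R tl"
    by (simp add: scaleR_add_right scaleR_add_left algebra_simps)
  moreover have "N*p = m*p + p*q" and "N*q = n*q + p*q" and "m*q + n*p + k*l = 2*(p*q)"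
    unfolding N_def k_def p_def q_def by algebra+
  ultimately have "(m*p + p*q) *\<^sub>R V1 + (n*q + p*q) *\<^sub>R V3 + N *\<^sub>R t2
      = (m*p) *\<^sub>R V1 + (2*(p*q)) *\<^sub>R V2 + (n*q) *\<^sub>R V3 + (m+n) *\<^sub>R tB + k *\<^sub>R tl"
    by simp
  then have "(p*q) *\<^sub>R (V1 + V3 - 2 *\<^sub>R V2) = (m+n) *\<^sub>R tB + (k *\<^sub>R tl - N *\<^sub>R t2)"
    by (simp add: scaleR_add_left scaleR_add_right scaleR_diff_right algebra_simps)
  then show ?thesis unfolding k_def N_def p_def q_def .
qed

locale jordan_centralizer = scalar_space sc for sc :: "'k::real_normed_field \<Rightarrow> 'a::banach \<Rightarrow> 'a" +
  fixes L :: "'a set set" and m n l :: nat and \<delta> :: "('a \<Rightarrow> 'a) \<Rightarrow> ('a \<Rightarrow> 'a)"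
    and lam :: "('a \<Rightarrow> 'a) \<Rightarrow> 'k"
  assumes lat: "subspace_lattice sc L"
    and wjc: "weak_jordan_centralizer sc L m n l \<delta>"
    and lam: "\<forall>A\<in>alg sc L. wjc_identity sc m n l \<delta> A (lam A)"
    and ml: "m + l \<ge> 1" and nl: "n + l \<ge> 1"
begin

abbreviation "D \<equiv> \<delta> id"

lemma delta_alg: "A \<in> alg sc L \<Longrightarrow> \<delta> A \<in> alg sc L"
  using wjc unfolding weak_jordan_centralizer_def by blast

lemma delta_add: "A \<in> alg sc L \<Longrightarrow> B \<in> alg sc L \<Longrightarrow> \<delta> (\<lambda>y. A y + B y) = (\<lambda>y. \<delta> A y + \<delta> B y)"
  using wjc unfolding weak_jordan_centralizer_def by blast

lemma D_alg: "D \<in> alg sc L" using delta_alg[OF id_alg] .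

lemma defining_identity:
  assumes "A \<in> alg sc L"
  shows "real (m+n+l) *\<^sub>R \<delta> (A \<circ> A) y = real m *\<^sub>R \<delta> A (A y) + real n *\<^sub>R A (\<delta> A y)
          + real l *\<^sub>R A (D (A y)) + sc (lam A) y"
  using lam assms unfolding wjc_identity_def sc_nat by blast

text \<open>Linearised identity: comparing the defining identity at B + I with that at B gives
  (m+n+2l) delta(B) = (m+l) D B + (n+l) B D + (lam(B+I) - lam B) I.\<close>
lemma linearised_identity:
  assumes B: "B \<in> alg sc L"
  shows "(real m + real n + 2 * real l) *\<^sub>R \<delta> B y = (real m + real l) *\<^sub>R D (B y) + (real n + real l) *\<^sub>R B (D y)
          + (sc (lam (\<lambda>z. B z + z)) y - sc (lam B) y)"
proof -
  define B1 where "B1 = (\<lambda>z. B z + z)"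
  have B1': "B1 = (\<lambda>z. B z + id z)" unfolding B1_def by simp
  have B1a: "B1 \<in> alg sc L" unfolding B1' by (rule alg_add[OF B id_alg lat])
  have BB: "B \<circ> B \<in> alg sc L" using alg_comp[OF B B] by (simp add: comp_def)
  have B2: "(\<lambda>y. B y + B y) \<in> alg sc L" by (rule alg_add[OF B B lat])
  have P: "(\<lambda>y. (B \<circ> B) y + (B y + B y)) \<in> alg sc L" using alg_add[OF BB B2 lat] by simp
  have square: "B1 \<circ> B1 = (\<lambda>y. (\<lambda>y. (B \<circ> B) y + (B y + B y)) y + id y)"
    unfolding B1_def by (auto simp: alg_linear_add[OF B] algebra_simps)
  have e0: "\<delta> (B1 \<circ> B1) y = \<delta> (B \<circ> B) y + \<delta> B y + \<delta> B y + D y"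
    unfolding square delta_add[OF P id_alg] using delta_add[OF BB B2] delta_add[OF B B] by (simp add: fun_eq_iff)
  have dB1: "\<delta> B1 z = \<delta> B z + D z" for z unfolding B1' delta_add[OF B id_alg] ..
  have e1: "\<delta> B1 (B1 y) = \<delta> B (B y) + \<delta> B y + D (B y) + D y"
    using dB1[of "B1 y"] by (simp add: B1_def alg_linear_add[OF delta_alg[OF B]] alg_linear_add[OF D_alg])
  have e2: "B1 (\<delta> B1 y) = B (\<delta> B y) + B (D y) + \<delta> B y + D y"
    using dB1[of y] by (simp add: B1_def alg_linear_add[OF B])
  have e3: "B1 (D (B1 y)) = B (D (B y)) + B (D y) + D (B y) + D y"
    unfolding B1_def alg_linear_add[OF D_alg] alg_linear_add[OF B] by simp
  have "real (m+n+l) *\<^sub>R (\<delta> (B \<circ> B) y + \<delta> B y + \<delta> B y + D y) =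
     real m *\<^sub>R (\<delta> B (B y) + \<delta> B y + D (B y) + D y) + real n *\<^sub>R (B (\<delta> B y) + B (D y) + \<delta> B y + D y)
     + real l *\<^sub>R (B (D (B y)) + B (D y) + D (B y) + D y) + sc (lam B1) y"
    using defining_identity[OF B1a, of y] by (simp only: e0 e1 e2 e3)
  then show ?thesis
    using linearisation_algebra defining_identity[OF B, of y, unfolded of_nat_add] unfolding B1_def of_nat_add
    by blast
qed

lemma commutator_identity:
  assumes B: "B \<in> alg sc L"
  shows "\<exists>\<alpha> \<nu>. \<forall>y. ((real m + real l) * (real n + real l)) *\<^sub>R (D (B (B y)) + B (B (D y)) - 2 *\<^sub>R B (D (B y)))
     = sc \<alpha> (B y) + sc \<nu> y"
proof -
  have BB: "B \<circ> B \<in> alg sc L" using alg_comp[OF B B] by (simp add: comp_def)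
  define \<mu> where "\<mu> = lam (\<lambda>z. B z + z) - lam B"
  define \<mu>2 where "\<mu>2 = lam (\<lambda>z. (B \<circ> B) z + z) - lam (B \<circ> B)"
  define \<alpha> where "\<alpha> = (of_nat (m+n) :: 'k) * \<mu>"
  define \<nu> where "\<nu> = of_real (real m + real n + 2 * real l) * lam B - of_real (real m + real n + real l) * \<mu>2"
  have "((real m + real l) * (real n + real l)) *\<^sub>R (D (B (B y)) + B (B (D y)) - 2 *\<^sub>R B (D (B y)))
     = sc \<alpha> (B y) + sc \<nu> y" for y
  proof -
    have F2: "(real m + real n + 2 * real l) *\<^sub>R \<delta> (B \<circ> B) y
        = (real m + real l) *\<^sub>R D (B (B y)) + (real n + real l) *\<^sub>R B (B (D y)) + sc \<mu>2 y"
      using linearised_identity[OF BB, of y] unfolding \<mu>2_def M.scale_left_diff_distrib by simp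
    have F3: "(real m + real n + 2 * real l) *\<^sub>R \<delta> B (B y)
        = (real m + real l) *\<^sub>R D (B (B y)) + (real n + real l) *\<^sub>R B (D (B y)) + sc \<mu> (B y)"
      using linearised_identity[OF B, of "B y"] unfolding \<mu>_def M.scale_left_diff_distrib by simp
    have "B ((real m + real n + 2 * real l) *\<^sub>R \<delta> B y)
        = B ((real m + real l) *\<^sub>R D (B y) + (real n + real l) *\<^sub>R B (D y) + sc \<mu> y)"
      using linearised_identity[OF B, of y] unfolding \<mu>_def M.scale_left_diff_distrib by simp
    then have F4: "(real m + real n + 2 * real l) *\<^sub>R B (\<delta> B y)
        = (real m + real l) *\<^sub>R B (D (B y)) + (real n + real l) *\<^sub>R B (B (D y)) + sc \<mu> (B y)"
      by (simp add: alg_linear_real[OF B] alg_linear_add[OF B] alg_linear_sc[OF B])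
    have H: "(real m + real n + real l) *\<^sub>R \<delta> (B \<circ> B) y = real m *\<^sub>R \<delta> B (B y) + real n *\<^sub>R B (\<delta> B y)
          + real l *\<^sub>R B (D (B y)) + sc (lam B) y"
      using defining_identity[OF B, of y] by simp
    have "sc \<alpha> (B y) = (real m + real n) *\<^sub>R sc \<mu> (B y)"
      unfolding \<alpha>_def M.scale_scale[symmetric] sc_nat by simp
    moreover have "sc \<nu> y = (real m + real n + 2 * real l) *\<^sub>R sc (lam B) y - (real m + real n + real l) *\<^sub>R sc \<mu>2 y"
      unfolding \<nu>_def M.scale_left_diff_distrib M.scale_scale[symmetric] sc_real ..
    ultimately show ?thesis using commutator_algebra[OF F2 F3 F4 H] by simp
  qed
  then show ?thesis by blast
qed

end

context jordan_centralizer
begin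

lemma mn_pos: "(real m + real l) * (real n + real l) > 0"
  using ml nl by (simp add: add_pos_nonneg)

text \<open>If u \<otimes> h lies in alg L and h u \<noteq> 0, then u is an eigenvector of D: the commutator
  identity at u \<otimes> h, evaluated at u, expresses h(u)^2 D u as a multiple of u.\<close>
lemma rank_one_eigenvector:
  assumes h: "bounded_functional sc h" and B: "rank_one sc u h \<in> alg sc L" and hu: "h u \<noteq> 0"
  shows "\<exists>c. D u = sc c u"
proof -
  define P where "P = (real m + real l) * (real n + real l)"
  obtain \<alpha> \<nu> where Q: "\<And>y. P *\<^sub>R (D (rank_one sc u h (rank_one sc u h y)) + rank_one sc u h (rank_one sc u h (D y))
     - 2 *\<^sub>R rank_one sc u h (D (rank_one sc u h y))) = sc \<alpha> (rank_one sc u h y) + sc \<nu> y"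
    using commutator_identity[OF B] unfolding P_def by blast
  define \<beta> \<gamma> where "\<beta> = h u" and "\<gamma> = h (D u)"
  have r1: "rank_one sc u h u = sc \<beta> u" unfolding rank_one_def \<beta>_def ..
  have r2: "rank_one sc u h (sc a u) = sc (a * \<beta>) u" for a unfolding rank_one_def \<beta>_def bf_sc[OF h] ..
  have r3: "rank_one sc u h (sc a (D u)) = sc (a * \<gamma>) u" for a unfolding rank_one_def \<gamma>_def bf_sc[OF h] ..
  have r4: "rank_one sc u h (D u) = sc \<gamma> u" unfolding rank_one_def \<gamma>_def ..
  have "P *\<^sub>R (sc (\<beta> * \<beta>) (D u) + sc (\<gamma> * \<beta>) u - 2 *\<^sub>R sc (\<beta> * \<gamma>) u) = sc \<alpha> (sc \<beta> u) + sc \<nu> u"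
    using Q[of u] unfolding r1 r2 r4 alg_linear_sc[OF D_alg] r3 .
  then have "P *\<^sub>R (sc (\<beta> * \<beta>) (D u) - sc (\<gamma> * \<beta>) u) = sc \<alpha> (sc \<beta> u) + sc \<nu> u"
    by (simp add: mult.commute scaleR_2)
  then have "P *\<^sub>R sc (\<beta> * \<beta>) (D u) = sc \<alpha> (sc \<beta> u) + sc \<nu> u + P *\<^sub>R sc (\<gamma> * \<beta>) u"
    by (simp add: scaleR_diff_right diff_eq_eq)
  then have "sc (of_real P * (\<beta> * \<beta>)) (D u) = sc (\<alpha> * \<beta> + \<nu> + of_real P * (\<gamma> * \<beta>)) u"
    unfolding sc_real[symmetric] M.scale_scale M.scale_left_distrib .
  moreover have "of_real P * (\<beta> * \<beta>) \<noteq> 0"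
    using mn_pos hu unfolding P_def[symmetric] \<beta>_def by simp
  ultimately show ?thesis using sc_solve by blast
qed

text \<open>Elements x with h x = 0 are handled
  through the eigenvectors x', x + x', x + 2x', which forces D x \<in> K x.\<close>
lemma eigenvector_on_additive_set:
  assumes Sadd: "\<And>a b. a \<in> S \<Longrightarrow> b \<in> S \<Longrightarrow> a + b \<in> S" and h: "bounded_functional sc h"
    and ro: "\<And>u. u \<in> S \<Longrightarrow> rank_one sc u h \<in> alg sc L" and x': "x' \<in> S" "h x' \<noteq> 0" and x: "x \<in> S"
  shows "\<exists>c. D x = sc c x"
proof (cases "h x = 0")
  case False then show ?thesis using rank_one_eigenvector[OF h ro[OF x]] by blast
next
  case True
  have h1: "h (x + x') \<noteq> 0" and h2: "h (x + (x' + x')) \<noteq> 0" using True x'(2) bf_add[OF h] by simp_all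
  obtain c0 where c0: "D x' = sc c0 x'" using rank_one_eigenvector[OF h ro[OF x'(1)] x'(2)] by blast
  obtain c1 where c1: "D (x + x') = sc c1 (x + x')"
    using rank_one_eigenvector[OF h ro[OF Sadd[OF x x'(1)]] h1] by blast
  obtain c2 where c2: "D (x + (x' + x')) = sc c2 (x + (x' + x'))"
    using rank_one_eigenvector[OF h ro[OF Sadd[OF x Sadd[OF x'(1) x'(1)]]] h2] by blast
  have e1: "D x = sc c1 x + sc c1 x' - sc c0 x'"
    using c1 c0 unfolding alg_linear_add[OF D_alg] M.scale_right_distrib by (simp add: eq_diff_eq)
  have e2: "D x = sc c2 x + sc c2 x' + sc c2 x' - sc c0 x' - sc c0 x'"
    using c2 c0 unfolding alg_linear_add[OF D_alg] M.scale_right_distrib by (simp add: eq_diff_eq add.assoc)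
  have x'0: "x' \<noteq> 0" using x'(2) bf_0[OF h] by auto
  have "sc c1 x - sc c2 x = sc c2 x' + sc c2 x' - sc c0 x' - sc c1 x'"
    using e1 e2 by (simp add: algebra_simps)
  then have eq: "sc (c1 - c2) x = sc (2*c2 - c0 - c1) x'"
    unfolding mult_2 M.scale_left_diff_distrib M.scale_left_distrib .
  show ?thesis
  proof (cases "c1 = c2")
    case True
    then have "2*c2 - c0 - c1 = 0" using eq x'0 sc_eq_0_iff by simp
    then have "D x = sc c1 x" using e1 True by simp
    then show ?thesis by blast
  next
    case False
    then have x_mult: "x = sc ((2*c2 - c0 - c1) / (c1 - c2)) x'" using sc_solve[OF eq] by simp
    have "D x = sc c0 x" unfolding x_mult alg_linear_sc[OF D_alg] c0 by (simp add: mult.commute)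
    then show ?thesis by blast
  qed
qed

text \<open>The degenerate case: f kills x, y, Dx, Dy, g kills x and Dx, and g y = 1.  Then
  B = x \<otimes> g + y \<otimes> f satisfies B^2 = x \<otimes> f and B D B = g(Dy) x \<otimes> f, and the commutator
  identity evaluated at x, at y and at a point z0 with f z0 \<noteq> 0 forces D x \<in> K x.\<close>
lemma degenerate_eigenvector:
  assumes f: "bounded_functional sc f" and g: "bounded_functional sc g"
    and C: "rank_one sc x g \<in> alg sc L" and Y: "rank_one sc y f \<in> alg sc L"
    and gx: "g x = 0" and gDx: "g (D x) = 0" and gy: "g y = 1"
    and fx: "f x = 0" and fDx: "f (D x) = 0" and fy: "f y = 0" and fDy: "f (D y) = 0"
    and x0: "x \<noteq> 0" and z0: "f z0 \<noteq> 0"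
  shows "\<exists>c. D x = sc c x"
proof -
  define B where "B = (\<lambda>z. rank_one sc x g z + rank_one sc y f z)"
  define P where "P = (real m + real l) * (real n + real l)"
  obtain \<alpha> \<nu> where Q: "\<And>z. P *\<^sub>R (D (B (B z)) + B (B (D z)) - 2 *\<^sub>R B (D (B z))) = sc \<alpha> (B z) + sc \<nu> z"
    using commutator_identity[OF alg_add[OF C Y lat, folded B_def]] unfolding P_def by blast
  have Bz: "B z = sc (g z) x + sc (f z) y" for z unfolding B_def rank_one_def ..
  have BB: "B (B z) = sc (f z) x" for z
    unfolding Bz[of "B z"] unfolding Bz bf_add[OF g] bf_sc[OF g] bf_add[OF f] bf_sc[OF f] gx gy fx fy by simp
  have DB: "D (B z) = sc (g z) (D x) + sc (f z) (D y)" for z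
    unfolding Bz alg_linear_add[OF D_alg] alg_linear_sc[OF D_alg] ..
  have BDB: "B (D (B z)) = sc (f z * g (D y)) x" for z
    unfolding Bz[of "D (B z)"] unfolding DB bf_add[OF g] bf_sc[OF g] bf_add[OF f] bf_sc[OF f] gDx fDx fDy
    by simp
  have main: "P *\<^sub>R (sc (f z) (D x) + sc (f (D z)) x - 2 *\<^sub>R sc (f z * g (D y)) x) = sc \<alpha> (B z) + sc \<nu> z" for z
    using Q[of z] unfolding BB BDB alg_linear_sc[OF D_alg] .
  have "sc \<nu> x = 0" using main[of x] unfolding Bz fx gx fDx by simp
  then have \<nu>: "\<nu> = 0" using x0 sc_eq_0_iff by blast
  have "sc \<alpha> x = 0" using main[of y] unfolding Bz fy gy fDy \<nu> by simp
  then have \<alpha>: "\<alpha> = 0" using x0 sc_eq_0_iff by blast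
  have "P *\<^sub>R (sc (f z0) (D x) + sc (f (D z0)) x - 2 *\<^sub>R sc (f z0 * g (D y)) x) = 0"
    using main[of z0] unfolding \<alpha> \<nu> by simp
  then have "sc (f z0) (D x) + sc (f (D z0)) x - 2 *\<^sub>R sc (f z0 * g (D y)) x = 0"
    using mn_pos unfolding P_def[symmetric] by simp
  then have "sc (f z0) (D x) = 2 *\<^sub>R sc (f z0 * g (D y)) x - sc (f (D z0)) x"
    by (simp add: algebra_simps)
  also have "\<dots> = sc (2 * (f z0 * g (D y)) - f (D z0)) x"
    unfolding sc_real[symmetric] M.scale_scale M.scale_left_diff_distrib by simp
  finally show ?thesis using sc_solve z0 by blast
qed

text \<open>Three cases: f does not vanish on K
  (use the operators v \<otimes> f, v \<in> K); E is not contained in E_- (use v \<otimes> g, v \<in> E, with g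
  annihilating E_-); otherwise the degenerate lemma applies to x and a point y \<in> K \<setminus> E_-.\<close>
lemma identity_eigenvector:
  assumes rc: "real_or_complex TYPE('k)" and E: "E \<in> L" and K: "K \<in> L"
    and nsub: "\<not> K \<subseteq> lminus sc L E" and x: "x \<in> E"
    and f: "f \<in> annihilator sc (lminus sc L K)" and z0: "f z0 \<noteq> 0"
  shows "\<exists>c. D x = sc c x"
proof -
  have cks: "\<And>F. F \<in> L \<Longrightarrow> closed_ksubspace sc F" using lat unfolding subspace_lattice_def by blast
  have EK: "E \<subseteq> K" using contains_of_not_in_lminus[OF K subset_refl nsub] .
  have fb: "bounded_functional sc f" using f unfolding annihilator_def by blast
  have sep: "\<exists>g. g \<in> annihilator sc (lminus sc L E) \<and> bounded_functional sc g \<and> g u = 1"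
    if "u \<notin> lminus sc L E" for u
    using scalar_separation[OF rc lminus_ksubspace that] unfolding annihilator_def by blast
  consider (f_on_K) u where "u \<in> K" "f u \<noteq> 0" | (E_not_below) u where "u \<in> E" "u \<notin> lminus sc L E"
    | (degenerate) "\<forall>u\<in>K. f u = 0" "E \<subseteq> lminus sc L E" by blast
  then show ?thesis
  proof cases
    case f_on_K
    have "rank_one sc v f \<in> alg sc L" if "v \<in> K" for v by (rule rank_one_alg[OF lat that f])
    then show ?thesis
      using eigenvector_on_additive_set[OF cks_add[OF cks[OF K]] fb _ f_on_K] x EK by blast
  next
    case E_not_below
    then obtain g where g: "g \<in> annihilator sc (lminus sc L E)" "bounded_functional sc g" "g u = 1"
      using sep by blast
    have "rank_one sc v g \<in> alg sc L" if "v \<in> E" for v by (rule rank_one_alg[OF lat that g(1)])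
    then show ?thesis
      using eigenvector_on_additive_set[OF cks_add[OF cks[OF E]] g(2) _ E_not_below(1)] g(3) x by simp
  next
    case degenerate
    obtain y where y: "y \<in> K" "y \<notin> lminus sc L E" using nsub by blast
    obtain g where g: "g \<in> annihilator sc (lminus sc L E)" "bounded_functional sc g" "g y = 1"
      using sep[OF y(2)] by blast
    have gE: "\<forall>z\<in>E. g z = 0" using g(1) degenerate(2) unfolding annihilator_def by blast
    have Dx: "D x \<in> E" and Dy: "D y \<in> K" using alg_invariant[OF D_alg] E K x y(1) by blast+
    show ?thesis
    proof (cases "x = 0")
      case True
      then show ?thesis using alg_zero[OF D_alg] by (intro exI[of _ 0]) simp
    next
      case False
      have "g x = 0" "g (D x) = 0" using gE x Dx by blast+
      moreover have "f x = 0" "f (D x) = 0" "f y = 0" "f (D y) = 0"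
        using degenerate(1) EK x Dx y(1) Dy by blast+
      moreover have "rank_one sc x g \<in> alg sc L" by (rule rank_one_alg[OF lat x g(1)])
      moreover have "rank_one sc y f \<in> alg sc L" by (rule rank_one_alg[OF lat y(1) f])
      ultimately show ?thesis using degenerate_eigenvector[OF fb g(2) _ _ _ _ g(3) _ _ _ _ False z0] by blast
    qed
  qed
qed

text \<open>The conclusion for a rank-one operator A = x \<otimes> f in alg L once D A has range in K x:
  by the linearised identity, (m+n+2l)(delta(A) - lambda(A)) y = (m+l) D(A y) + (n+l) f(Dy) x.\<close>
lemma delta_rank_one:
  assumes A: "rank_one sc x f \<in> alg sc L" and DA: "\<And>y. \<exists>c. D (rank_one sc x f y) = sc c x"
  shows "\<exists>c. \<delta> (rank_one sc x f) y
              - sc ((lam (\<lambda>z. rank_one sc x f z + z) - lam (rank_one sc x f)) / of_nat (m + n + 2 * l)) y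
            = sc c x"
proof -
  obtain c where c: "D (rank_one sc x f y) = sc c x" using DA by blast
  define k where "k = (of_nat (m + n + 2 * l) :: 'k)"
  define \<mu> where "\<mu> = lam (\<lambda>z. rank_one sc x f z + z) - lam (rank_one sc x f)"
  define d where "d = of_real (real m + real l) * c + of_real (real n + real l) * f (D y)"
  have "m + n + 2 * l \<noteq> 0" using ml by linarith
  then have "k \<noteq> 0" unfolding k_def by (metis of_nat_eq_0_iff)
  have "(real m + real n + 2 * real l) *\<^sub>R \<delta> (rank_one sc x f) y
      = (real m + real l) *\<^sub>R sc c x + (real n + real l) *\<^sub>R sc (f (D y)) x + sc \<mu> y"
    using linearised_identity[OF A, of y] unfolding c \<mu>_def M.scale_left_diff_distrib
    by (simp add: rank_one_def)
  then have "sc k (\<delta> (rank_one sc x f) y) = sc d x + sc \<mu> y"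
    unfolding sc_real[symmetric] M.scale_scale M.scale_left_distrib k_def d_def by simp
  then have "\<delta> (rank_one sc x f) y = sc (inverse k) (sc d x + sc \<mu> y)"
    using \<open>k \<noteq> 0\<close> by (metis M.scale_scale M.scale_one left_inverse)
  then have "\<delta> (rank_one sc x f) y - sc (\<mu> / k) y = sc (inverse k * d) x"
    unfolding M.scale_right_distrib M.scale_scale by (simp add: divide_inverse mult.commute)
  then show ?thesis unfolding \<mu>_def k_def by blast
qed

end

theorem lemma2p10:
  fixes sc :: "'k::real_normed_field \<Rightarrow> 'a::banach \<Rightarrow> 'a"
    and \<L> :: "'a set set"
    and m n l :: nat
    and \<delta> :: "('a \<Rightarrow> 'a) \<Rightarrow> ('a \<Rightarrow> 'a)"
    and lam :: "('a \<Rightarrow> 'a) \<Rightarrow> 'k"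
    and E L :: "'a set"
    and x :: 'a
    and f :: "'a \<Rightarrow> 'k"
  assumes "real_or_complex TYPE('k)"
    and "scalar_structure sc"
    and "m + l \<ge> 1" and "n + l \<ge> 1"
    and "subspace_lattice sc \<L>"
    and "weak_jordan_centralizer sc \<L> m n l \<delta>"
    and "\<forall>A\<in>alg sc \<L>. wjc_identity sc m n l \<delta> A (lam A)"
    and "E \<in> Jset sc \<L>" and "L \<in> Jset sc \<L>"
    and "\<not> L \<subseteq> lminus sc \<L> E"
    and "x \<in> E"
    and "f \<in> annihilator sc (lminus sc \<L> L)"
  shows "rank_one sc x f \<in> alg sc \<L> \<and>
         (\<forall>y. \<exists>c. \<delta> (rank_one sc x f) y
                    - sc ((lam (\<lambda>z. rank_one sc x f z + z) - lam (rank_one sc x f))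
                          / of_nat (m + n + 2 * l)) y
                  = sc c x)"
proof -
  interpret jordan_centralizer sc \<L> m n l \<delta> lam
    by unfold_locales (use assms in auto)
  have EL: "E \<in> \<L>" and LL: "L \<in> \<L>" using assms(8,9) unfolding Jset_def by auto
  have A: "rank_one sc x f \<in> alg sc \<L>"
    using rank_one_alg[OF lat assms(11,12)] contains_of_not_in_lminus assms(10) by blast
  have "\<exists>c. D (rank_one sc x f y) = sc c x" for y
  proof (cases "\<forall>z. f z = 0")
    case True
    then show ?thesis using alg_zero[OF D_alg] by (intro exI[of _ 0]) (simp add: rank_one_def)
  next
    case False
    then obtain c where "D x = sc c x"
      using identity_eigenvector[OF assms(1) EL LL assms(10,11,12)] by blast
    then show ?thesis by (intro exI[of _ "f y * c"]) (simp add: rank_one_def alg_linear_sc[OF D_alg])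
  qed
  then show ?thesis using A delta_rank_one by blast
qed

end
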